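(* Define $\alpha,\beta:[0,2\pi]\to\mathbb{R}^3$ and $\gamma:[0,\pi]\to\mathbb{R}^3$ by $\alpha(t)=(\cos t,\sin t,1)$, $\beta(t)=(\cos t,\sin t,-1)$, $\gamma(t)=\big(2\cos(2t)-1,\ 2\sin(2t),\ \tfrac98\cos t-\tfrac18\cos(3t)\big)$, and let $C=\operatorname{conv}\big(\alpha([0,2\pi])\cup\beta([0,2\pi])\cup\gamma([0,\pi])\big)$. Then the set of extreme points of $C$ is exactly $\alpha([0,2\pi])\cup\beta([0,2\pi])\cup\gamma([0,\pi])$, and every extreme point of $C$ is exposed.
   Context: An extreme point $p$ of $C$ is exposed if there is a supporting hyperplane $H$ of $C$ with $C\cap H=\{p\}$. *)

theory Defs
  imports "HOL-Analysis.Analysis"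
begin

definition exposed_point_of :: "'a::euclidean_space \<Rightarrow> 'a set \<Rightarrow> bool" where
  "exposed_point_of p C \<longleftrightarrow> p extreme_point_of C \<and>
     (\<exists>a b. a \<noteq> 0 \<and> (\<forall>x\<in>C. a \<bullet> x \<le> b) \<and> C \<inter> {x. a \<bullet> x = b} = {p})"

definition alpha_curve :: "real \<Rightarrow> real^3" where
  "alpha_curve t = vector [cos t, sin t, 1]"

definition beta_curve :: "real \<Rightarrow> real^3" where
  "beta_curve t = vector [cos t, sin t, -1]"

definition gamma_curve :: "real \<Rightarrow> real^3" where
  "gamma_curve t = vector [2 * cos (2*t) - 1, 2 * sin (2*t), 9/8 * cos t - 1/8 * cos (3*t)]"

definition C_set :: "(real^3) set" where
  "C_set = convex hull (alpha_curve ` {0..2*pi} \<union> beta_curve ` {0..2*pi} \<union> gamma_curve ` {0..pi})"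

end

theory Submission
  imports Defs
begin

(* Let S be the union of the three curves. If a point p of S is the unique maximiser on S
   of a nonzero linear functional, then p is an exposed point of conv S; and every extreme
   point of conv S lies in S. So it suffices to find such a functional for each p in S.

   At gamma t with 0 < t < pi the horizontal normal (cos 2t, sin 2t, 0) works: the
   horizontal projection of gamma is the circle of radius 2 about (-1, 0), which contains
   the unit circle (the projection of alpha and beta) and touches it only at (1, 0).
   At alpha s the normal is (cos s, sin s, L): writing c = cos u, the height (3c - c^3)/2
   of gamma u falls short of 1 by (1 - c)^2 (2 + c)/2, so a weight L of order
   1/(1 - cos s) suffices (and L = 1 at the common point alpha 0 = gamma 0).
   The reflection z -> -z maps alpha to beta and the whole curve gamma onto itself,
   which transfers the result from alpha to beta. *)

section \<open>Unique maximisers of linear functionals\<close>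

definition unique_linear_maximizer :: "'a::real_inner set \<Rightarrow> 'a \<Rightarrow> bool" where
  "unique_linear_maximizer S p \<longleftrightarrow>
     p \<in> S \<and> (\<exists>a. a \<noteq> 0 \<and> (\<forall>q\<in>S. q \<noteq> p \<longrightarrow> a \<bullet> q < a \<bullet> p))"

lemma unique_linear_maximizer_subset:
  "unique_linear_maximizer T p \<Longrightarrow> p \<in> S \<Longrightarrow> S \<subseteq> T \<Longrightarrow> unique_linear_maximizer S p"
  unfolding unique_linear_maximizer_def by blast

lemma unique_linear_maximizer_image:
  assumes "unique_linear_maximizer S p" and inner_pres: "\<And>x y. f x \<bullet> f y = x \<bullet> y"
  shows "unique_linear_maximizer (f ` S) (f p)"
proof -
  obtain a where "p \<in> S" "a \<noteq> 0" and less: "\<forall>q\<in>S. q \<noteq> p \<longrightarrow> a \<bullet> q < a \<bullet> p"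
    using assms(1) unfolding unique_linear_maximizer_def by blast
  moreover have "f a \<noteq> 0"
    using \<open>a \<noteq> 0\<close> inner_pres[of a a] by auto
  moreover have "f a \<bullet> f q < f a \<bullet> f p" if "q \<in> S" "f q \<noteq> f p" for q
    using less that inner_pres by auto
  ultimately show ?thesis
    unfolding unique_linear_maximizer_def by blast
qed

lemma convex_insert_halfspace_lt:
  fixes a p :: "'a::real_inner"
  shows "convex (insert p {x. a \<bullet> x < a \<bullet> p})"
  unfolding convex_def
proof (intro ballI allI impI)
  fix x y and u v :: real
  assume x: "x \<in> insert p {x. a \<bullet> x < a \<bullet> p}" and y: "y \<in> insert p {x. a \<bullet> x < a \<bullet> p}"
    and uv: "0 \<le> u" "0 \<le> v" "u + v = 1"
  show "u *\<^sub>R x + v *\<^sub>R y \<in> insert p {x. a \<bullet> x < a \<bullet> p}"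
  proof (cases "u = 0 \<or> v = 0")
    case True
    with uv x y show ?thesis by auto
  next
    case False
    then have "u > 0" "v > 0" using uv by auto
    show ?thesis
    proof (cases "x = p \<and> y = p")
      case True
      then show ?thesis using uv by (simp flip: scaleR_add_left)
    next
      case False
      have "a \<bullet> x \<le> a \<bullet> p" "a \<bullet> y \<le> a \<bullet> p"
        using x y by auto
      then have "u * (a \<bullet> x) \<le> u * (a \<bullet> p)" "v * (a \<bullet> y) \<le> v * (a \<bullet> p)"
        using uv by (simp_all add: mult_left_mono)
      moreover have "u * (a \<bullet> x) < u * (a \<bullet> p) \<or> v * (a \<bullet> y) < v * (a \<bullet> p)"
        using False x y \<open>u > 0\<close> \<open>v > 0\<close> by auto
      ultimately have "u * (a \<bullet> x) + v * (a \<bullet> y) < (u + v) * (a \<bullet> p)"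
        by (auto simp: distrib_right)
      then show ?thesis using uv by (simp add: inner_add_right)
    qed
  qed
qed

lemma exposed_point_of_convex_hull:
  fixes S :: "'a::euclidean_space set"
  assumes "unique_linear_maximizer S p"
  shows "exposed_point_of p (convex hull S)"
proof -
  obtain a where p: "p \<in> S" and "a \<noteq> 0" and less: "\<forall>q\<in>S. q \<noteq> p \<longrightarrow> a \<bullet> q < a \<bullet> p"
    using assms unfolding unique_linear_maximizer_def by blast
  have "convex hull S \<subseteq> insert p {x. a \<bullet> x < a \<bullet> p}"
    using less by (intro hull_minimal convex_insert_halfspace_lt) auto
  moreover have "p \<in> convex hull S"
    using p by (rule hull_inc)
  ultimately have le: "\<forall>x\<in>convex hull S. a \<bullet> x \<le> a \<bullet> p"
    and face: "convex hull S \<inter> {x. a \<bullet> x = a \<bullet> p} = {p}"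
    by auto
  have "p extreme_point_of convex hull S"
    using extreme_point_of_Int_supporting_hyperplane_le[OF face] le by blast
  with \<open>a \<noteq> 0\<close> le face show ?thesis
    unfolding exposed_point_of_def by blast
qed

lemma extreme_points_convex_hull_exposed:
  fixes S :: "'a::euclidean_space set"
  assumes "\<And>p. p \<in> S \<Longrightarrow> unique_linear_maximizer S p"
  shows "{p. p extreme_point_of convex hull S} = S"
    and "p extreme_point_of convex hull S \<Longrightarrow> exposed_point_of p (convex hull S)"
proof -
  have S_exposed: "exposed_point_of p (convex hull S)" if "p \<in> S" for p
    using assms[OF that] by (rule exposed_point_of_convex_hull)
  show "{p. p extreme_point_of convex hull S} = S"
    using extreme_point_of_convex_hull S_exposed unfolding exposed_point_of_def by blast
  show "p extreme_point_of convex hull S \<Longrightarrow> exposed_point_of p (convex hull S)"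
    using extreme_point_of_convex_hull S_exposed by blast
qed

lemma inner_vector_3:
  "(vector [a1, a2, a3] :: real^3) \<bullet> vector [b1, b2, b3] = a1 * b1 + a2 * b2 + a3 * b3"
  by (simp add: inner_vec_def sum_3)

lemma vector_3_eq_iff:
  "(vector [a1, a2, a3] :: 'a::zero^3) = vector [b1, b2, b3] \<longleftrightarrow> a1 = b1 \<and> a2 = b2 \<and> a3 = b3"
  by (simp add: vec_eq_iff forall_3)

lemma vector_3_eq_0_iff:
  "(vector [a1, a2, a3] :: 'a::zero^3) = 0 \<longleftrightarrow> a1 = 0 \<and> a2 = 0 \<and> a3 = 0"
  by (simp add: vec_eq_iff forall_3)

lemma unit_circle_inner_le_1:
  fixes a b x y :: real
  assumes "a\<^sup>2 + b\<^sup>2 = 1" "x\<^sup>2 + y\<^sup>2 = 1"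
  shows "a * x + b * y \<le> 1"
    and "a * x + b * y = 1 \<longleftrightarrow> x = a \<and> y = b"
proof -
  have dist_sq: "(x - a)\<^sup>2 + (y - b)\<^sup>2 = 2 - 2 * (a * x + b * y)"
    using assms by (simp add: power2_eq_square algebra_simps)
  then have "0 \<le> 2 - 2 * (a * x + b * y)"
    by (metis add_nonneg_nonneg zero_le_power2)
  then show "a * x + b * y \<le> 1"
    by simp
  show "a * x + b * y = 1 \<longleftrightarrow> x = a \<and> y = b"
  proof
    assume "a * x + b * y = 1"
    then have "(x - a)\<^sup>2 + (y - b)\<^sup>2 = 0"
      using dist_sq by simp
    then show "x = a \<and> y = b"
      by (simp add: sum_power2_eq_zero_iff)
  qed (use assms(1) in \<open>simp add: power2_eq_square\<close>)
qed

lemma gamma_curve_cos_sin: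
  "gamma_curve u = vector [4 * (cos u)\<^sup>2 - 3, 4 * cos u * sin u, (3 * cos u - (cos u) ^ 3) / 2]"
  unfolding gamma_curve_def vector_3_eq_iff cos_double_cos sin_double cos_treble_cos
  by (simp add: algebra_simps)

lemma gamma_curve_0: "gamma_curve 0 = alpha_curve 0"
  by (simp add: gamma_curve_def alpha_curve_def vector_3_eq_iff)

lemma gamma_curve_pi: "gamma_curve pi = beta_curve 0"
  by (simp add: gamma_curve_def beta_curve_def vector_3_eq_iff)

section \<open>Normals at the circles\<close>

lemma gamma_vertex_bound:
  fixes c :: real
  assumes "\<bar>c\<bar> \<le> 1" "c \<noteq> 1"
  shows "4 * c\<^sup>2 - 3 + (3 * c - c ^ 3) / 2 < 2"
proof -
  have "c\<^sup>2 \<le> 1"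
    using assms(1) by (simp add: abs_square_le_1)
  then have "0 < (1 - c) * (10 + 7 * c - c\<^sup>2)"
    using assms by (intro mult_pos_pos) auto
  moreover have "2 - (4 * c\<^sup>2 - 3 + (3 * c - c ^ 3) / 2) = (1 - c) * (10 + 7 * c - c\<^sup>2) / 2"
    by (simp add: power2_eq_square power3_eq_cube field_simps)
  ultimately show ?thesis
    by linarith
qed

lemma gamma_alpha_linear_bound:
  fixes x0 y0 c s :: real
  assumes "x0\<^sup>2 + y0\<^sup>2 = 1" "c\<^sup>2 + s\<^sup>2 = 1"
  shows "x0 * (4 * c\<^sup>2 - 3) + y0 * (4 * c * s) - 1 \<le> 40 * (1 - c) - (1 - x0) / 2"
proof -
  have "x0\<^sup>2 \<le> 1" "c\<^sup>2 \<le> 1"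
    using assms zero_le_power2[of y0] zero_le_power2[of s] by linarith+
  then have x0_bound: "\<bar>x0\<bar> \<le> 1" and c_bound: "\<bar>c\<bar> \<le> 1"
    by (simp_all add: abs_square_le_1)
  have "y0\<^sup>2 = (1 - x0) * (1 + x0)" "s\<^sup>2 = (1 - c) * (1 + c)"
    using assms by (simp_all add: power2_eq_square algebra_simps)
  moreover have "(1 - x0) * (1 + x0) \<le> 2 * (1 - x0)" and c_sq: "(1 - c) * (1 + c) \<le> 2 * (1 - c)"
    using zero_le_power2[of "1 - x0"] zero_le_power2[of "1 - c"]
    by (simp_all add: power2_eq_square algebra_simps)
  ultimately have y0_sq: "y0\<^sup>2 \<le> 2 * (1 - x0)" and s_sq: "s\<^sup>2 \<le> 2 * (1 - c)"
    by linarith+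
  have "y0 * (4 * c * s) \<le> \<bar>y0 * (4 * c * s)\<bar>"
    by (rule abs_ge_self)
  also have "\<dots> = 4 * \<bar>y0\<bar> * \<bar>s\<bar> * \<bar>c\<bar>"
    by (simp add: abs_mult)
  also have "\<dots> \<le> 4 * \<bar>y0\<bar> * \<bar>s\<bar>"
    using c_bound by (simp add: mult_left_le)
  also have "\<dots> \<le> y0\<^sup>2 / 4 + 16 * s\<^sup>2"
    using zero_le_power2[of "\<bar>y0\<bar> / 2 - 4 * \<bar>s\<bar>"] by (simp add: power2_eq_square algebra_simps)
  finally have cross: "y0 * (4 * c * s) \<le> (1 - x0) / 2 + 32 * (1 - c)"
    using y0_sq s_sq by linarith
  have "0 \<le> (1 + x0) * ((1 - c) * (1 + c))"
    using x0_bound c_bound by simp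
  then have "x0 * (4 * c\<^sup>2 - 3) - 1 \<le> - (1 - x0) + 4 * ((1 - c) * (1 + c))"
    by (simp add: power2_eq_square algebra_simps)
  with c_sq cross show ?thesis
    by argo
qed

lemma gamma_height_deficit:
  fixes c :: real
  assumes "\<bar>c\<bar> \<le> 1"
  shows "(1 - c)\<^sup>2 / 2 \<le> 1 - (3 * c - c ^ 3) / 2"
proof -
  have "(1 - c)\<^sup>2 * 1 \<le> (1 - c)\<^sup>2 * (2 + c)"
    using assms by (intro mult_left_mono) auto
  then have "(1 - c)\<^sup>2 / 2 \<le> (1 - c)\<^sup>2 * (2 + c) / 2"
    by simp
  also have "\<dots> = 1 - (3 * c - c ^ 3) / 2"
    by (simp add: power2_eq_square power3_eq_cube field_simps)
  finally show ?thesis .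
qed

(* With e = 1 - x0 and d = 1 - c: either the left-hand side, at most 40 d - e/2, is
   negative, or d >= e/80 and the right-hand side is at least 8000/e * d^2/2 >= 50 d. *)
lemma gamma_alpha_bound:
  fixes x0 y0 c s :: real
  assumes "x0\<^sup>2 + y0\<^sup>2 = 1" "c\<^sup>2 + s\<^sup>2 = 1" "x0 < 1"
  shows "x0 * (4 * c\<^sup>2 - 3) + y0 * (4 * c * s) - 1 < 8000 / (1 - x0) * (1 - (3 * c - c ^ 3) / 2)"
proof -
  define e d where "e = 1 - x0" and "d = 1 - c"
  have "c\<^sup>2 \<le> 1"
    using assms(2) zero_le_power2[of s] by linarith
  then have "\<bar>c\<bar> \<le> 1"
    by (simp add: abs_square_le_1)
  then have "e > 0" "0 \<le> d" and height: "d\<^sup>2 / 2 \<le> 1 - (3 * c - c ^ 3) / 2"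
    using assms(3) gamma_height_deficit by (auto simp: e_def d_def)
  have lin: "x0 * (4 * c\<^sup>2 - 3) + y0 * (4 * c * s) - 1 \<le> 40 * d - e / 2"
    using gamma_alpha_linear_bound[OF assms(1,2)] by (simp add: e_def d_def)
  have "x0 * (4 * c\<^sup>2 - 3) + y0 * (4 * c * s) - 1 < 8000 / e * (1 - (3 * c - c ^ 3) / 2)"
  proof (cases "80 * d < e")
    case True
    have "0 \<le> 1 - (3 * c - c ^ 3) / 2"
      using height zero_le_power2[of d] by linarith
    then have "0 \<le> 8000 / e * (1 - (3 * c - c ^ 3) / 2)"
      using \<open>e > 0\<close> by simp
    with lin True show ?thesis
      by linarith
  next
    case False
    then have "50 * d \<le> 8000 / e * (d\<^sup>2 / 2)"
      using \<open>e > 0\<close> \<open>0 \<le> d\<close> by (simp add: power2_eq_square field_simps mult_right_mono)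
    also have "\<dots> \<le> 8000 / e * (1 - (3 * c - c ^ 3) / 2)"
      using \<open>e > 0\<close> by (intro mult_left_mono[OF height]) simp
    finally show ?thesis
      using lin False \<open>e > 0\<close> by linarith
  qed
  then show ?thesis
    by (simp add: e_def)
qed

lemma alpha_normal_z_exists:
  fixes x0 y0 :: real
  assumes "x0\<^sup>2 + y0\<^sup>2 = 1"
  obtains L :: real where "L > 0"
    and "\<And>c s. c\<^sup>2 + s\<^sup>2 = 1 \<Longrightarrow> \<not> (c = 1 \<and> x0 = 1) \<Longrightarrow>
           x0 * (4 * c\<^sup>2 - 3) + y0 * (4 * c * s) + L * ((3 * c - c ^ 3) / 2) < 1 + L"
proof (cases "x0 = 1")
  case True
  then have "y0 = 0"
    using assms by simp
  have "4 * c\<^sup>2 - 3 + (3 * c - c ^ 3) / 2 < 2" if "c\<^sup>2 + s\<^sup>2 = 1" "c \<noteq> 1" for c s :: real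
  proof (rule gamma_vertex_bound)
    have "c\<^sup>2 \<le> 1"
      using that(1) zero_le_power2[of s] by linarith
    then show "\<bar>c\<bar> \<le> 1"
      by (simp add: abs_square_le_1)
  qed (use that in simp)
  with True \<open>y0 = 0\<close> show thesis
    by (intro that[of 1]) auto
next
  case False
  have "x0\<^sup>2 \<le> 1"
    using assms zero_le_power2[of y0] by linarith
  then have "\<bar>x0\<bar> \<le> 1"
    by (simp add: abs_square_le_1)
  with False have "x0 < 1"
    by linarith
  show thesis
  proof (rule that[of "8000 / (1 - x0)"])
    show "8000 / (1 - x0) > 0"
      using \<open>x0 < 1\<close> by simp
    fix c s :: real
    assume "c\<^sup>2 + s\<^sup>2 = 1"
    from gamma_alpha_bound[OF assms this \<open>x0 < 1\<close>]
    show "x0 * (4 * c\<^sup>2 - 3) + y0 * (4 * c * s) + 8000 / (1 - x0) * ((3 * c - c ^ 3) / 2)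
          < 1 + 8000 / (1 - x0)"
      by (simp add: right_diff_distrib)
  qed
qed

lemma unique_linear_maximizer_alpha_curve:
  "unique_linear_maximizer (range alpha_curve \<union> range beta_curve \<union> range gamma_curve) (alpha_curve s0)"
proof -
  obtain L where "L > 0" and gamma_below:
    "\<And>c s. c\<^sup>2 + s\<^sup>2 = 1 \<Longrightarrow> \<not> (c = 1 \<and> cos s0 = 1) \<Longrightarrow>
       cos s0 * (4 * c\<^sup>2 - 3) + sin s0 * (4 * c * s) + L * ((3 * c - c ^ 3) / 2) < 1 + L"
    using alpha_normal_z_exists[of "cos s0" "sin s0"] by auto
  define a where "a = (vector [cos s0, sin s0, L] :: real^3)"
  have circle: "cos s0 * cos t + sin s0 * sin t \<le> 1" for t
    by (rule unit_circle_inner_le_1) simp_all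
  have a_alpha: "a \<bullet> alpha_curve t = cos s0 * cos t + sin s0 * sin t + L" for t
    by (simp add: a_def alpha_curve_def inner_vector_3)
  have a_p: "a \<bullet> alpha_curve s0 = 1 + L"
    using a_alpha[of s0] sin_cos_squared_add3[of s0] by simp
  have "a \<bullet> q < a \<bullet> alpha_curve s0"
    if q: "q \<in> range alpha_curve \<union> range beta_curve \<union> range gamma_curve" "q \<noteq> alpha_curve s0" for q
  proof -
    consider t where "q = alpha_curve t" | t where "q = beta_curve t" | u where "q = gamma_curve u"
      using q(1) by blast
    then show ?thesis
    proof cases
      case (1 t)
      with q(2) have "cos s0 * cos t + sin s0 * sin t \<noteq> 1"
        by (simp add: alpha_curve_def vector_3_eq_iff
            unit_circle_inner_le_1(2)[of "cos s0" "sin s0" "cos t" "sin t"])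
      with circle[of t] show ?thesis
        using 1 by (simp add: a_alpha a_p)
    next
      case (2 t)
      then have "a \<bullet> q = cos s0 * cos t + sin s0 * sin t - L"
        by (simp add: a_def beta_curve_def inner_vector_3)
      with circle[of t] \<open>L > 0\<close> show ?thesis
        by (simp add: a_p)
    next
      case (3 u)
      have "\<not> (cos u = 1 \<and> cos s0 = 1)"
        using q(2) by (auto simp: 3 gamma_curve_cos_sin alpha_curve_def vector_3_eq_iff cos_one_sin_zero)
      moreover have "a \<bullet> q = cos s0 * (4 * (cos u)\<^sup>2 - 3) + sin s0 * (4 * cos u * sin u)
          + L * ((3 * cos u - cos u ^ 3) / 2)"
        by (simp add: 3 a_def gamma_curve_cos_sin inner_vector_3)
      ultimately show ?thesis
        using gamma_below[of "cos u" "sin u"] a_p by simp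
    qed
  qed
  moreover have "a \<noteq> 0"
    using \<open>L > 0\<close> by (simp add: a_def vector_3_eq_0_iff)
  ultimately show ?thesis
    unfolding unique_linear_maximizer_def by blast
qed

definition reflect_z :: "real^3 \<Rightarrow> real^3" where
  "reflect_z x = vector [x$1, x$2, - x$3]"

lemma inner_reflect_z: "reflect_z x \<bullet> reflect_z y = x \<bullet> y"
  by (simp add: reflect_z_def inner_vector_3 inner_vec_def sum_3)

lemma reflect_z_alpha_curve: "reflect_z (alpha_curve t) = beta_curve t"
  by (simp add: reflect_z_def alpha_curve_def beta_curve_def)

lemma reflect_z_beta_curve: "reflect_z (beta_curve t) = alpha_curve t"
  by (simp add: reflect_z_def alpha_curve_def beta_curve_def)

lemma reflect_z_gamma_curve: "reflect_z (gamma_curve u) = gamma_curve (u + pi)"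
  by (simp add: reflect_z_def gamma_curve_cos_sin vector_3_eq_iff field_simps)

lemma reflect_z_reflect_z: "reflect_z (reflect_z x) = x"
  by (simp add: reflect_z_def vec_eq_iff forall_3)

lemma reflect_z_curves:
  "reflect_z ` (range alpha_curve \<union> range beta_curve \<union> range gamma_curve) =
     range alpha_curve \<union> range beta_curve \<union> range gamma_curve" (is "reflect_z ` ?T = ?T")
proof
  show sub: "reflect_z ` ?T \<subseteq> ?T"
    by (auto simp: reflect_z_alpha_curve reflect_z_beta_curve reflect_z_gamma_curve)
  show "?T \<subseteq> reflect_z ` ?T"
  proof
    fix x assume "x \<in> ?T"
    with sub have "reflect_z x \<in> ?T"
      by blast
    then show "x \<in> reflect_z ` ?T"
      by (metis image_eqI reflect_z_reflect_z)
  qed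
qed

lemma unique_linear_maximizer_beta_curve:
  "unique_linear_maximizer (range alpha_curve \<union> range beta_curve \<union> range gamma_curve) (beta_curve s)"
  using unique_linear_maximizer_image[OF unique_linear_maximizer_alpha_curve inner_reflect_z]
  by (simp only: reflect_z_curves reflect_z_alpha_curve)

section \<open>Normals at the curve gamma\<close>

lemma double_angle_inner_eq_1_imp_eq:
  fixes u t :: real
  assumes "0 \<le> u" "u \<le> pi" "0 < t" "t < pi"
    and "cos (2 * t) * cos (2 * u) + sin (2 * t) * sin (2 * u) = 1"
  shows "u = t"
proof -
  have "cos (2 * u) = cos (2 * t)" and sin2: "sin (2 * u) = sin (2 * t)"
    using assms(5) unit_circle_inner_le_1(2)[of "cos (2 * t)" "sin (2 * t)" "cos (2 * u)" "sin (2 * u)"]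
    by simp_all
  then have "(sin u)\<^sup>2 = (sin t)\<^sup>2"
    unfolding cos_double_sin by simp
  moreover have "sin t > 0"
    using assms(3,4) by (rule sin_gt_zero)
  moreover have "sin u \<ge> 0"
    using assms(1,2) by (rule sin_ge_zero)
  ultimately have "sin u = sin t"
    using power2_eq_iff_nonneg by fastforce
  moreover have "sin u * cos u = sin t * cos t"
    using sin2 unfolding sin_double by simp
  ultimately have "cos u = cos t"
    using \<open>sin t > 0\<close> by (metis mult_left_cancel less_irrefl)
  with assms(1-4) show "u = t"
    by (intro cos_inj_pi[of u t]) simp_all
qed

(* Here the parameter range [0, pi] matters: gamma (t + pi) has the same horizontal
   projection as gamma t. *)
lemma unique_linear_maximizer_gamma_curve:
  assumes "0 < t" "t < pi"
  shows "unique_linear_maximizer (range alpha_curve \<union> range beta_curve \<union> gamma_curve ` {0..pi})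
           (gamma_curve t)"
proof -
  define a where "a = (vector [cos (2 * t), sin (2 * t), 0] :: real^3)"
  have circle: "cos (2 * t) * cos s + sin (2 * t) * sin s \<le> 1" for s
    by (rule unit_circle_inner_le_1) simp_all
  have "cos (2 * t) < 1"
    using sin_gt_zero[OF assms] by (simp add: cos_double_sin)
  have a_gamma: "a \<bullet> gamma_curve u = 2 * (cos (2 * t) * cos (2 * u) + sin (2 * t) * sin (2 * u)) - cos (2 * t)"
    for u
    by (simp add: a_def gamma_curve_def inner_vector_3 algebra_simps)
  have a_p: "a \<bullet> gamma_curve t = 2 - cos (2 * t)"
    using a_gamma[of t] sin_cos_squared_add3[of "2 * t"] by simp
  have "a \<bullet> q < a \<bullet> gamma_curve t"
    if q: "q \<in> range alpha_curve \<union> range beta_curve \<union> gamma_curve ` {0..pi}" "q \<noteq> gamma_curve t" for q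
  proof -
    consider s where "q = alpha_curve s \<or> q = beta_curve s"
      | u where "q = gamma_curve u" "u \<in> {0..pi}"
      using q(1) by blast
    then show ?thesis
    proof cases
      case (1 s)
      then have "a \<bullet> q = cos (2 * t) * cos s + sin (2 * t) * sin s"
        by (auto simp: a_def alpha_curve_def beta_curve_def inner_vector_3)
      with circle[of s] \<open>cos (2 * t) < 1\<close> show ?thesis
        by (simp add: a_p)
    next
      case (2 u)
      have "cos (2 * t) * cos (2 * u) + sin (2 * t) * sin (2 * u) \<noteq> 1"
        using 2 q(2) assms double_angle_inner_eq_1_imp_eq[of u t] by auto
      with circle[of "2 * u"] show ?thesis
        using 2 by (simp add: a_gamma a_p)
    qed
  qed
  moreover have "a \<noteq> 0"
  proof
    assume "a = 0"
    then have "cos (2 * t) = 0" "sin (2 * t) = 0"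
      by (simp_all add: a_def vector_3_eq_0_iff)
    then show False
      using sin_cos_squared_add[of "2 * t"] by simp
  qed
  moreover have "gamma_curve t \<in> gamma_curve ` {0..pi}"
    using assms by simp
  ultimately show ?thesis
    unfolding unique_linear_maximizer_def by blast
qed

lemma gamma_curve_image_subset:
  "gamma_curve ` {0..pi} \<subseteq> range alpha_curve \<union> range beta_curve \<union> gamma_curve ` {0<..<pi}"
proof
  fix x assume "x \<in> gamma_curve ` {0..pi}"
  then obtain u where "x = gamma_curve u" "0 \<le> u" "u \<le> pi"
    by auto
  then consider "x = gamma_curve 0" | "x = gamma_curve pi" | "x \<in> gamma_curve ` {0<..<pi}"
    by (cases "u = 0 \<or> u = pi") auto
  then show "x \<in> range alpha_curve \<union> range beta_curve \<union> gamma_curve ` {0<..<pi}"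
    by cases (auto simp: gamma_curve_0 gamma_curve_pi)
qed

lemma unique_linear_maximizer_curves:
  assumes "p \<in> alpha_curve ` {0..2*pi} \<union> beta_curve ` {0..2*pi} \<union> gamma_curve ` {0..pi}"
    (is "p \<in> ?S")
  shows "unique_linear_maximizer ?S p"
proof -
  have full: "?S \<subseteq> range alpha_curve \<union> range beta_curve \<union> range gamma_curve"
    and half: "?S \<subseteq> range alpha_curve \<union> range beta_curve \<union> gamma_curve ` {0..pi}"
    by auto
  have "p \<in> range alpha_curve \<union> range beta_curve \<union> gamma_curve ` {0<..<pi}"
    using assms gamma_curve_image_subset by blast
  then consider s where "p = alpha_curve s" | s where "p = beta_curve s"
    | u where "p = gamma_curve u" "0 < u" "u < pi"
    by auto
  then show ?thesis
  proof cases
    case (1 s)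
    from assms show ?thesis
      unfolding 1 by (rule unique_linear_maximizer_subset[OF unique_linear_maximizer_alpha_curve _ full])
  next
    case (2 s)
    from assms show ?thesis
      unfolding 2 by (rule unique_linear_maximizer_subset[OF unique_linear_maximizer_beta_curve _ full])
  next
    case (3 u)
    from assms show ?thesis
      unfolding 3(1) by (rule unique_linear_maximizer_subset[OF unique_linear_maximizer_gamma_curve[OF 3(2,3)] _ half])
  qed
qed

theorem proposition5p4:
  shows "{p. p extreme_point_of C_set} =
           alpha_curve ` {0..2*pi} \<union> beta_curve ` {0..2*pi} \<union> gamma_curve ` {0..pi}
         \<and> (\<forall>p. p extreme_point_of C_set \<longrightarrow> exposed_point_of p C_set)"
  unfolding C_set_def
  by (intro conjI allI impI extreme_points_convex_hull_exposed unique_linear_maximizer_curves)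

end
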